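(* Let $f,g$ be elements both lying in $A$, or both lying in $B$, such that $f\notin HgH$. Then there exists an integer $t_0>1$ such that for every positive integer $t$ divisible by $t_0$, $f\rho_t\notin H(t)\,(g\rho_t)\,H(t)$.
   Context: Fix integers $m,n>1$ and let $G_{mn}=\langle a,b;\ [a^m,b^n]=1\rangle$. Put $c=a^m$, $d=b^n$, $H=\langle c,d\rangle$, $A=\langle a,H\rangle$, $B=\langle b,H\rangle$. For an integer $t>1$ let $G_{mn}(t)=\langle a,b;\ [a^m,b^n]=1,\ a^{mt}=b^{nt}=1\rangle$, $\rho_t:G_{mn}\to G_{mn}(t)$ the natural homomorphism, and $H(t)=H\rho_t$. *)

theory Defs
  imports "HOL-Algebra.Coset" "HOL-Algebra.Generated_Groups"
begin

datatype gen = Ga | Gb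

text \<open>A letter is a generator together with an exponent sign (True = inverse).
  Words are lists of letters.\<close>
type_synonym letter = "gen \<times> bool"
type_synonym word = "letter list"

fun linv :: "letter \<Rightarrow> letter" where
  "linv (x, e) = (x, \<not> e)"

definition winv :: "word \<Rightarrow> word" where
  "winv w = rev (map linv w)"

definition wpow :: "gen \<Rightarrow> int \<Rightarrow> word" where
  "wpow x k = (if 0 \<le> k then replicate (nat k) (x, False) else replicate (nat (- k)) (x, True))"

inductive pres_eq :: "word set \<Rightarrow> word \<Rightarrow> word \<Rightarrow> bool" for R :: "word set" where
  refl: "pres_eq R u u"
| sym: "pres_eq R u v \<Longrightarrow> pres_eq R v u"
| trans: "pres_eq R u v \<Longrightarrow> pres_eq R v w \<Longrightarrow> pres_eq R u w"
| cancel: "pres_eq R (u @ [l, linv l] @ v) (u @ v)"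
| relator: "r \<in> R \<Longrightarrow> pres_eq R (u @ r @ v) (u @ v)"

definition pres_rel :: "word set \<Rightarrow> (word \<times> word) set" where
  "pres_rel R = {(u, v). pres_eq R u v}"

definition word_class :: "word set \<Rightarrow> word \<Rightarrow> word set" where
  "word_class R w = pres_rel R `` {w}"

definition presented_group :: "word set \<Rightarrow> word set monoid" where
  "presented_group R =
     \<lparr>carrier = UNIV // pres_rel R,
      mult = (\<lambda>X Y. word_class R ((SOME u. u \<in> X) @ (SOME v. v \<in> Y))),
      one = word_class R []\<rparr>"

definition comm_rel :: "nat \<Rightarrow> nat \<Rightarrow> word" where
  "comm_rel m n = wpow Ga (- int m) @ wpow Gb (- int n) @ wpow Ga (int m) @ wpow Gb (int n)"

definition Gmn :: "nat \<Rightarrow> nat \<Rightarrow> word set monoid" where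
  "Gmn m n = presented_group {comm_rel m n}"

definition Gmnt :: "nat \<Rightarrow> nat \<Rightarrow> nat \<Rightarrow> word set monoid" where
  "Gmnt m n t = presented_group {comm_rel m n, wpow Ga (int (m * t)), wpow Gb (int (n * t))}"

definition a_el :: "nat \<Rightarrow> nat \<Rightarrow> word set" where
  "a_el m n = word_class {comm_rel m n} [(Ga, False)]"

definition b_el :: "nat \<Rightarrow> nat \<Rightarrow> word set" where
  "b_el m n = word_class {comm_rel m n} [(Gb, False)]"

definition c_el :: "nat \<Rightarrow> nat \<Rightarrow> word set" where
  "c_el m n = a_el m n [^]\<^bsub>Gmn m n\<^esub> m"

definition d_el :: "nat \<Rightarrow> nat \<Rightarrow> word set" where
  "d_el m n = b_el m n [^]\<^bsub>Gmn m n\<^esub> n"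

definition Hsub :: "nat \<Rightarrow> nat \<Rightarrow> word set set" where
  "Hsub m n = generate (Gmn m n) {c_el m n, d_el m n}"

definition Asub :: "nat \<Rightarrow> nat \<Rightarrow> word set set" where
  "Asub m n = generate (Gmn m n) (insert (a_el m n) (Hsub m n))"

definition Bsub :: "nat \<Rightarrow> nat \<Rightarrow> word set set" where
  "Bsub m n = generate (Gmn m n) (insert (b_el m n) (Hsub m n))"

definition rho :: "nat \<Rightarrow> nat \<Rightarrow> nat \<Rightarrow> word set \<Rightarrow> word set" where
  "rho m n t X = word_class {comm_rel m n, wpow Ga (int (m * t)), wpow Gb (int (n * t))} (SOME w. w \<in> X)"

definition Ht :: "nat \<Rightarrow> nat \<Rightarrow> nat \<Rightarrow> word set set" where
  "Ht m n t = rho m n t ` Hsub m n"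

end

(* Take f, g \<in> A; the case of B is the same with the roles of a and b exchanged. With
   d = b^n, every element of A is W u h with h \<in> H, where W u is a product of alternating
   syllables a^i (0 < i < m) and d^j (j \<noteq> 0) ending with an a-syllable. Since f \<notin> H g H,
   the syllable sequences of f and g still differ after removing a leading d-syllable.
   Now G_mn(t) acts on pairs (syllable sequence, counter): a raises the leading a-exponent
   mod m, and b counts up to n and then raises the leading d-exponent mod t. The relators act
   trivially, H(t) fixes the base point and changes only leading d-syllables, and f sends the
   base point to its own syllable sequence with the d-exponents reduced mod t. Once t exceeds
   twice every exponent occurring in f and g this reduction is injective, which separates
   f \<rho>_t from H(t) (g \<rho>_t) H(t). *)

theory Submission
  imports Defs
begin

section \<open>Presented groups\<close>

lemma pres_eq_append_context: "pres_eq R u v \<Longrightarrow> pres_eq R (p @ u @ q) (p @ v @ q)"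
proof (induction rule: pres_eq.induct)
  case (cancel u l v)
  show ?case using pres_eq.cancel[of R "p @ u" l "v @ q"] by simp
next
  case (relator r u v)
  then show ?case using pres_eq.relator[of r R "p @ u" "v @ q"] by simp
qed (auto intro: pres_eq.intros)

lemma pres_eq_append: "pres_eq R u u' \<Longrightarrow> pres_eq R v v' \<Longrightarrow> pres_eq R (u @ v) (u' @ v')"
  using pres_eq_append_context[of R u u' "[]" v] pres_eq_append_context[of R v v' u' "[]"]
  by (auto intro: pres_eq.trans)

lemma pres_eq_mono: "pres_eq R u v \<Longrightarrow> R \<subseteq> R' \<Longrightarrow> pres_eq R' u v"
proof (induction rule: pres_eq.induct)
  case (cancel u l v)
  show ?case by (rule pres_eq.cancel)
qed (auto intro: pres_eq.intros)

lemma equiv_pres_rel: "equiv UNIV (pres_rel R)"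
  unfolding equiv_def refl_on_def sym_def trans_def pres_rel_def
  by (auto intro: pres_eq.intros)

lemma word_class_eq_iff: "word_class R u = word_class R v \<longleftrightarrow> pres_eq R u v"
  using eq_equiv_class_iff[OF equiv_pres_rel, of u v R]
  by (simp add: word_class_def pres_rel_def)

lemma mem_word_class_iff: "v \<in> word_class R u \<longleftrightarrow> pres_eq R u v"
  by (simp add: word_class_def pres_rel_def)

lemma mem_word_class_self: "w \<in> word_class R w"
  by (simp add: mem_word_class_iff pres_eq.refl)

lemma pres_eq_some_word_class: "pres_eq R w (SOME v. v \<in> word_class R w)"
  using someI[of "\<lambda>v. v \<in> word_class R w", OF mem_word_class_self] mem_word_class_iff by fast

lemma word_class_some_mono:
  "R \<subseteq> R' \<Longrightarrow> word_class R' (SOME v. v \<in> word_class R w) = word_class R' w"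
  using pres_eq_some_word_class[of R w]
  by (auto simp: word_class_eq_iff intro: pres_eq_mono pres_eq.sym)

lemma carrier_presented_group: "carrier (presented_group R) = range (word_class R)"
  by (auto simp: presented_group_def quotient_def word_class_def)

lemma mult_word_class:
  "word_class R u \<otimes>\<^bsub>presented_group R\<^esub> word_class R v = word_class R (u @ v)"
  using pres_eq_some_word_class[of R u] pres_eq_some_word_class[of R v]
  by (simp add: presented_group_def word_class_eq_iff pres_eq_append pres_eq.sym)

lemma one_presented_group: "\<one>\<^bsub>presented_group R\<^esub> = word_class R []"
  by (simp add: presented_group_def)

lemma pres_eq_winv_append: "pres_eq R (winv w @ w) []"
proof (induction w)
  case (Cons l w)
  have "pres_eq R (winv w @ [linv l, linv (linv l)] @ w) (winv w @ w)"
    by (rule pres_eq.cancel)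
  then show ?case
    using Cons by (cases l) (auto simp: winv_def intro: pres_eq.trans)
qed (simp add: winv_def pres_eq.refl)

lemma group_presented_group: "group (presented_group R)"
proof (rule groupI)
  fix x
  assume "x \<in> carrier (presented_group R)"
  then obtain w where "x = word_class R w"
    by (auto simp: carrier_presented_group)
  then show "\<exists>y\<in>carrier (presented_group R). y \<otimes>\<^bsub>presented_group R\<^esub> x = \<one>\<^bsub>presented_group R\<^esub>"
    by (auto simp: mult_word_class one_presented_group word_class_eq_iff pres_eq_winv_append
        carrier_presented_group intro!: exI[of _ "winv w"])
qed (auto simp: carrier_presented_group mult_word_class one_presented_group)

lemma inv_word_class: "inv\<^bsub>presented_group R\<^esub> (word_class R w) = word_class R (winv w)"
  by (rule group.inv_equality[OF group_presented_group])
    (auto simp: mult_word_class one_presented_group word_class_eq_iff pres_eq_winv_append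
      carrier_presented_group)

lemma winv_wpow: "winv (wpow g k) = wpow g (- k)"
  by (simp add: winv_def wpow_def)

lemma word_class_replicate:
  "word_class R [l] [^]\<^bsub>presented_group R\<^esub> (k::nat) = word_class R (replicate k l)"
  by (induction k) (auto simp: one_presented_group mult_word_class replicate_append_same[symmetric])

lemma word_class_wpow:
  "word_class R (wpow g k) = word_class R [(g, False)] [^]\<^bsub>presented_group R\<^esub> k"
proof -
  interpret group "presented_group R" by (rule group_presented_group)
  show ?thesis
    using word_class_replicate[of R "(g, False)"]
    by (auto simp: int_pow_def2 wpow_def inv_word_class winv_def carrier_presented_group)
qed

lemma foldr_pres_eq:
  assumes "pres_eq R u v"
    and closed: "\<And>l s. s \<in> S \<Longrightarrow> F l s \<in> S"
    and linv: "\<And>l s. s \<in> S \<Longrightarrow> F (linv l) (F l s) = s"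
    and relators_trivial: "\<And>r s. r \<in> R \<Longrightarrow> s \<in> S \<Longrightarrow> foldr F r s = s"
    and "s \<in> S"
  shows "foldr F u s = foldr F v s"
proof -
  have foldr_closed: "foldr F w s \<in> S" for w
    using \<open>s \<in> S\<close> closed by (induction w) auto
  show ?thesis
    using assms(1)
  proof (induction rule: pres_eq.induct)
    case (cancel u l v)
    show ?case
      using linv[OF foldr_closed, of "linv l" v] by (cases l) simp
  next
    case (relator r u v)
    then show ?case
      using relators_trivial[OF _ foldr_closed] by simp
  qed simp_all
qed

section \<open>Syllable sequences\<close>

text \<open>The syllable (True, i) stands for a^i and (False, j) for d^j.\<close>
fun normal_syllables :: "nat \<Rightarrow> (int \<Rightarrow> bool) \<Rightarrow> (bool \<times> int) list \<Rightarrow> bool" where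
  "normal_syllables P D [] = True"
| "normal_syllables P D [(b, e)] = (b \<and> 1 \<le> e \<and> e < int P)"
| "normal_syllables P D ((b, e) # (b', e') # r) =
     (b \<noteq> b' \<and> (if b then 1 \<le> e \<and> e < int P else D e) \<and> normal_syllables P D ((b', e') # r))"

abbreviation normal_mod :: "nat \<Rightarrow> nat \<Rightarrow> (bool \<times> int) list \<Rightarrow> bool" where
  "normal_mod P t \<equiv> normal_syllables P (\<lambda>j. 0 < j \<and> j < int t)"

fun head_is :: "bool \<Rightarrow> (bool \<times> int) list \<Rightarrow> bool" where
  "head_is b [] = False"
| "head_is b (x # r) = (fst x = b)"

definition cons_syl :: "bool \<Rightarrow> int \<Rightarrow> (bool \<times> int) list \<Rightarrow> (bool \<times> int) list" where
  "cons_syl b e r = (if e = 0 then r else (b, e) # r)"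

lemma normal_syllables_Cons_a:
  "normal_syllables P D ((True, i) # r) \<longleftrightarrow>
     1 \<le> i \<and> i < int P \<and> \<not> head_is True r \<and> normal_syllables P D r"
  by (cases r) auto

lemma normal_syllables_Cons_d:
  "normal_syllables P D ((False, j) # r) \<longleftrightarrow> D j \<and> head_is True r \<and> normal_syllables P D r"
  by (cases r) auto

lemma normal_syllables_cons_syl_a:
  "normal_syllables P D r \<Longrightarrow> \<not> head_is True r \<Longrightarrow> 0 \<le> i \<Longrightarrow> i < int P \<Longrightarrow>
    normal_syllables P D (cons_syl True i r)"
  by (simp add: cons_syl_def normal_syllables_Cons_a)

lemma normal_syllables_cons_syl_d:
  "normal_syllables P D r \<Longrightarrow> head_is True r \<Longrightarrow> (j \<noteq> 0 \<Longrightarrow> D j) \<Longrightarrow>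
    normal_syllables P D (cons_syl False j r)"
  by (simp add: cons_syl_def normal_syllables_Cons_d)

lemma normal_syllables_split_a:
  assumes "normal_syllables P D u" "0 < P"
  obtains i r where "u = cons_syl True i r" "0 \<le> i" "i < int P" "\<not> head_is True r"
    "normal_syllables P D r"
proof (cases u)
  case Nil
  then show ?thesis using that[of 0 "[]"] assms by (simp add: cons_syl_def)
next
  case (Cons x r)
  then show ?thesis
    using that[of "snd x" r] that[of 0 u] assms
    by (cases x; cases "fst x") (auto simp: cons_syl_def normal_syllables_Cons_a)
qed

lemma normal_syllables_split_d:
  assumes "normal_syllables P D u" "u \<noteq> []" "\<not> D 0"
  obtains j r where "u = cons_syl False j r" "j = 0 \<or> D j" "head_is True r"
    "normal_syllables P D r"
proof (cases u)
  case (Cons x r)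
  show ?thesis
  proof (cases "fst x")
    case True
    then show ?thesis
      using that[of 0 u] assms(1) Cons by (simp add: cons_syl_def)
  next
    case False
    then obtain j where "x = (False, j)"
      by (metis prod.collapse)
    moreover have "D j" "head_is True r" "normal_syllables P D r"
      using assms(1) Cons calculation by (simp_all add: normal_syllables_Cons_d)
    moreover have "j \<noteq> 0"
      using \<open>D j\<close> assms(3) by auto
    ultimately show ?thesis
      using that[of j r] Cons by (simp add: cons_syl_def)
  qed
qed (use assms in simp)

text \<open>Left multiplication by a and by d on syllable sequences, with a-exponents taken mod P
  and d-exponents mod t; d fixes the empty sequence, which stands for the coset H(t).\<close>
fun lmult_a :: "nat \<Rightarrow> (bool \<times> int) list \<Rightarrow> (bool \<times> int) list" where
  "lmult_a P ((True, i) # r) = cons_syl True ((i + 1) mod int P) r"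
| "lmult_a P r = cons_syl True (1 mod int P) r"

fun lmult_d :: "nat \<Rightarrow> (bool \<times> int) list \<Rightarrow> (bool \<times> int) list" where
  "lmult_d t ((False, j) # r) = cons_syl False ((j + 1) mod int t) r"
| "lmult_d t [] = []"
| "lmult_d t r = cons_syl False (1 mod int t) r"

lemma lmult_a_cons_syl:
  "\<not> head_is True r \<Longrightarrow>
    lmult_a P (cons_syl True (i mod int P) r) = cons_syl True ((i + 1) mod int P) r"
  using mod_add_left_eq[of i "int P" 1] by (cases r) (auto simp: cons_syl_def)

lemma lmult_a_pow:
  "\<not> head_is True r \<Longrightarrow>
    (lmult_a P ^^ k) (cons_syl True (i mod int P) r) = cons_syl True ((i + int k) mod int P) r"
  by (induction k) (simp_all add: lmult_a_cons_syl ac_simps)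

lemma lmult_d_cons_syl:
  "head_is True r \<Longrightarrow>
    lmult_d t (cons_syl False (j mod int t) r) = cons_syl False ((j + 1) mod int t) r"
  using mod_add_left_eq[of j "int t" 1] by (cases r) (auto simp: cons_syl_def)

lemma lmult_d_pow:
  "head_is True r \<Longrightarrow>
    (lmult_d t ^^ k) (cons_syl False (j mod int t) r) = cons_syl False ((j + int k) mod int t) r"
  by (induction k) (simp_all add: lmult_d_cons_syl ac_simps)

lemma lmult_d_pow_Nil: "(lmult_d t ^^ k) [] = []"
  by (induction k) simp_all

lemma lmult_a_normal:
  assumes "0 < P" "normal_syllables P D xs"
  shows "normal_syllables P D (lmult_a P xs)"
proof -
  obtain i r where "xs = cons_syl True i r" "0 \<le> i" "i < int P" "\<not> head_is True r"
    "normal_syllables P D r"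
    using normal_syllables_split_a[OF assms(2,1)] .
  then show ?thesis
    using lmult_a_cons_syl[of r P i] assms(1) by (auto intro: normal_syllables_cons_syl_a)
qed

lemma lmult_d_normal:
  assumes "0 < t" "normal_mod P t xs"
  shows "normal_mod P t (lmult_d t xs)"
proof (cases "xs = []")
  case False
  then obtain j r where "xs = cons_syl False j r" "j = 0 \<or> 0 < j \<and> j < int t" "head_is True r"
    "normal_mod P t r"
    using normal_syllables_split_d[OF assms(2) False] by blast
  then show ?thesis
    using lmult_d_cons_syl[of r t j] assms(1)
    by (auto intro!: normal_syllables_cons_syl_d simp: order_le_neq_trans)
qed simp

lemma lmult_a_pow_period:
  assumes "0 < P" "normal_syllables P D xs"
  shows "(lmult_a P ^^ P) xs = xs"
proof -
  obtain i r where "xs = cons_syl True i r" "0 \<le> i" "i < int P" "\<not> head_is True r"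
    using normal_syllables_split_a[OF assms(2,1)] .
  then show ?thesis
    using lmult_a_pow[where P = P and k = P and i = i and r = r] by simp
qed

lemma lmult_d_pow_period:
  assumes "normal_mod P t xs"
  shows "(lmult_d t ^^ t) xs = xs"
proof (cases "xs = []")
  case False
  then obtain j r where "xs = cons_syl False j r" "j = 0 \<or> 0 < j \<and> j < int t" "head_is True r"
    using normal_syllables_split_d[OF assms False] by blast
  then show ?thesis
    using lmult_d_pow[where t = t and k = t and j = j and r = r] by auto
qed (simp add: lmult_d_pow_Nil)

fun strip_d_head :: "(bool \<times> int) list \<Rightarrow> (bool \<times> int) list" where
  "strip_d_head ((False, j) # r) = r"
| "strip_d_head u = u"

lemma set_strip_d_head: "set (strip_d_head u) \<subseteq> set u"
  by (cases u rule: strip_d_head.cases) auto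

lemma strip_d_head_cons_syl: "head_is True r \<Longrightarrow> strip_d_head (cons_syl False j r) = r"
  by (cases r) (auto simp: cons_syl_def)

lemma strip_d_head_lmult_d_pow:
  assumes "normal_mod P t xs"
  shows "strip_d_head ((lmult_d t ^^ k) xs) = strip_d_head xs"
proof (cases "xs = []")
  case False
  then obtain j r where "xs = cons_syl False j r" "j = 0 \<or> 0 < j \<and> j < int t" "head_is True r"
    using normal_syllables_split_d[OF assms False] by blast
  then show ?thesis
    using lmult_d_pow[where t = t and k = k and j = j and r = r]
    by (auto simp: strip_d_head_cons_syl)
qed (simp add: lmult_d_pow_Nil)

definition reduce_d :: "nat \<Rightarrow> (bool \<times> int) list \<Rightarrow> (bool \<times> int) list" where
  "reduce_d t = map (\<lambda>(b, e). if b then (b, e) else (b, e mod int t))"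

lemma reduce_d_simps [simp]:
  "reduce_d t [] = []"
  "reduce_d t ((True, i) # r) = (True, i) # reduce_d t r"
  "reduce_d t ((False, j) # r) = (False, j mod int t) # reduce_d t r"
  by (simp_all add: reduce_d_def)

lemma head_is_reduce_d: "head_is b (reduce_d t r) = head_is b r"
  by (cases r) (auto simp: reduce_d_def split: prod.splits)

lemma strip_d_head_reduce_d: "strip_d_head (reduce_d t u) = reduce_d t (strip_d_head u)"
  by (cases u rule: strip_d_head.cases) simp_all

lemma normal_mod_reduce_d:
  assumes "normal_syllables P (\<lambda>j. j \<noteq> 0) u" "\<forall>x\<in>set u. \<bar>snd x\<bar> < int t"
  shows "normal_mod P t (reduce_d t u)"
  using assms
proof (induction u)
  case (Cons x r)
  obtain b e where x: "x = (b, e)" by (cases x)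
  show ?case
  proof (cases b)
    case True
    then show ?thesis
      using Cons x by (simp add: normal_syllables_Cons_a head_is_reduce_d)
  next
    case False
    then have "e \<noteq> 0" "\<bar>e\<bar> < int t"
      using Cons.prems x by (auto simp: normal_syllables_Cons_d)
    then have "e mod int t \<noteq> 0"
      using dvd_imp_le_int[of e "int t"] by (auto simp: mod_eq_0_iff_dvd)
    then have "0 < e mod int t" "e mod int t < int t"
      using \<open>\<bar>e\<bar> < int t\<close> by (simp_all add: order_le_neq_trans)
    then show ?thesis
      using Cons x False by (simp add: normal_syllables_Cons_d head_is_reduce_d)
  qed
qed simp

lemma reduce_d_inj:
  assumes "\<forall>x\<in>set u. \<bar>snd x\<bar> \<le> M" "\<forall>x\<in>set v. \<bar>snd x\<bar> \<le> M" "2 * M < int t"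
    and "reduce_d t u = reduce_d t v"
  shows "u = v"
proof -
  let ?f = "\<lambda>(b, e). if b then (b, e) else (b, e mod int t)"
  have "inj_on ?f {x. \<bar>snd x\<bar> \<le> M}"
  proof (rule inj_onI)
    fix x y :: "bool \<times> int"
    assume "x \<in> {x. \<bar>snd x\<bar> \<le> M}" "y \<in> {x. \<bar>snd x\<bar> \<le> M}" "?f x = ?f y"
    moreover obtain b e b' e' where "x = (b, e)" "y = (b', e')" by fastforce
    ultimately have "b = b'" "e mod int t = e' mod int t" "\<bar>e\<bar> \<le> M" "\<bar>e'\<bar> \<le> M"
      by (auto split: if_splits)
    moreover have "e = e'"
    proof (rule ccontr)
      assume "e \<noteq> e'"
      then have "int t \<le> \<bar>e - e'\<bar>"
        using \<open>e mod int t = e' mod int t\<close> dvd_imp_le_int[of "e - e'" "int t"]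
        by (simp add: mod_eq_dvd_iff)
      then show False
        using \<open>\<bar>e\<bar> \<le> M\<close> \<open>\<bar>e'\<bar> \<le> M\<close> assms(3) by linarith
    qed
    ultimately show "x = y"
      using \<open>x = (b, e)\<close> \<open>y = (b', e')\<close> by simp
  qed
  then have "inj_on ?f (set u \<union> set v)"
    by (rule inj_on_subset) (use assms(1,2) in auto)
  then show ?thesis
    using assms(4) inj_on_map_eq_map by (auto simp: reduce_d_def)
qed

section \<open>Normal forms in a group where a power of a commutes with d\<close>

lemma (in group) commutant_subgroup:
  assumes "z \<in> carrier G"
  shows "subgroup {x \<in> carrier G. z \<otimes> x = x \<otimes> z} G"
proof (rule subgroupI)
  fix x
  assume x: "x \<in> {x \<in> carrier G. z \<otimes> x = x \<otimes> z}"
  then have "x \<in> carrier G" "x \<otimes> z = z \<otimes> x"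
    by simp_all
  have "z \<otimes> inv x = inv x \<otimes> (x \<otimes> z) \<otimes> inv x"
    using \<open>x \<in> carrier G\<close> assms by (simp add: m_assoc[symmetric])
  also have "\<dots> = inv x \<otimes> (z \<otimes> x) \<otimes> inv x"
    by (simp only: \<open>x \<otimes> z = z \<otimes> x\<close>)
  also have "\<dots> = inv x \<otimes> z"
    using \<open>x \<in> carrier G\<close> assms by (simp add: m_assoc)
  finally show "inv x \<in> {x \<in> carrier G. z \<otimes> x = x \<otimes> z}"
    using \<open>x \<in> carrier G\<close> by simp
next
  fix x y
  assume "x \<in> {x \<in> carrier G. z \<otimes> x = x \<otimes> z}" "y \<in> {x \<in> carrier G. z \<otimes> x = x \<otimes> z}"
  then show "x \<otimes> y \<in> {x \<in> carrier G. z \<otimes> x = x \<otimes> z}"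
    using assms by (simp add: m_assoc[symmetric]) (simp add: m_assoc)
qed (use assms in auto)

lemma (in group) int_pow_commute:
  assumes "x \<in> carrier G" "y \<in> carrier G" "y \<otimes> x = x \<otimes> y"
  shows "y \<otimes> x [^] (k::int) = x [^] k \<otimes> y"
  using subgroup_int_pow_closed[OF commutant_subgroup[OF assms(2)], of x k] assms by simp

fun syl_prod :: "('a, 'b) monoid_scheme \<Rightarrow> 'a \<Rightarrow> 'a \<Rightarrow> (bool \<times> int) list \<Rightarrow> 'a" where
  "syl_prod G a d [] = \<one>\<^bsub>G\<^esub>"
| "syl_prod G a d ((b, e) # r) = (if b then a else d) [^]\<^bsub>G\<^esub> e \<otimes>\<^bsub>G\<^esub> syl_prod G a d r"

locale commuting_power = group G for G (structure) +
  fixes a d :: 'a and m :: nat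
  assumes a_closed: "a \<in> carrier G" and d_closed: "d \<in> carrier G" and m_pos: "0 < m"
    and power_commute: "a [^] m \<otimes> d = d \<otimes> a [^] m"
begin

abbreviation H :: "'a set" where "H \<equiv> generate G {a [^] m, d}"

abbreviation W :: "(bool \<times> int) list \<Rightarrow> 'a" where "W \<equiv> syl_prod G a d"

abbreviation normal :: "(bool \<times> int) list \<Rightarrow> bool" where
  "normal \<equiv> normal_syllables m (\<lambda>j. j \<noteq> 0)"

lemma subgroup_H: "subgroup H G"
  using generate_is_subgroup a_closed d_closed by simp

lemma subgroup_generate: "subgroup (generate G {a, d}) G"
  using generate_is_subgroup a_closed d_closed by simp

lemma syl_prod_in_generate: "W u \<in> generate G {a, d}"
proof (induction u)
  case (Cons x r)
  have "a \<in> generate G {a, d}" "d \<in> generate G {a, d}"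
    by (simp_all add: generate.incl)
  then show ?case
    using Cons subgroup_int_pow_closed[OF subgroup_generate]
    by (cases x) (simp add: subgroup.m_closed[OF subgroup_generate])
qed (simp add: generate.one)

lemma syl_prod_closed [simp]: "W u \<in> carrier G"
  using syl_prod_in_generate subgroup.subset[OF subgroup_generate] by blast

lemma a_power_commute_syl_prod: "a [^] m \<otimes> W u = W u \<otimes> a [^] m"
proof -
  have "{a, d} \<subseteq> {x \<in> carrier G. a [^] m \<otimes> x = x \<otimes> a [^] m}"
    using a_closed d_closed power_commute
      nat_pow_mult[OF a_closed, of m 1] nat_pow_mult[OF a_closed, of 1 m]
    by (simp add: add.commute)
  then show ?thesis
    using generate_subgroup_incl[OF _ commutant_subgroup] syl_prod_in_generate a_closed by blast
qed

lemma syl_prod_cons_syl: "W (cons_syl b e r) = (if b then a else d) [^] e \<otimes> W r"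
  by (simp add: cons_syl_def)

definition preserves_normal_forms :: "'a \<Rightarrow> bool" where
  "preserves_normal_forms x \<longleftrightarrow> (\<forall>u. normal u \<longrightarrow> (\<exists>u' h. normal u' \<and> h \<in> H \<and> x \<otimes> W u = W u' \<otimes> h))"

lemma preserves_normal_forms_mult:
  assumes "x \<in> carrier G" "y \<in> carrier G" "preserves_normal_forms x" "preserves_normal_forms y"
  shows "preserves_normal_forms (x \<otimes> y)"
  unfolding preserves_normal_forms_def
proof (intro allI impI)
  fix u
  assume "normal u"
  then obtain u1 h1 where 1: "normal u1" "h1 \<in> H" "y \<otimes> W u = W u1 \<otimes> h1"
    using assms(4) by (auto simp: preserves_normal_forms_def)
  then obtain u2 h2 where 2: "normal u2" "h2 \<in> H" "x \<otimes> W u1 = W u2 \<otimes> h2"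
    using assms(3) by (auto simp: preserves_normal_forms_def)
  have "h1 \<in> carrier G" "h2 \<in> carrier G"
    using 1 2 subgroup.subset[OF subgroup_H] by auto
  then have "x \<otimes> y \<otimes> W u = W u2 \<otimes> (h2 \<otimes> h1)"
    using assms(1,2) 1(3) 2(3) by (simp add: m_assoc) (simp add: m_assoc[symmetric])
  then show "\<exists>u' h. normal u' \<and> h \<in> H \<and> x \<otimes> y \<otimes> W u = W u' \<otimes> h"
    using 1 2 subgroup.m_closed[OF subgroup_H] by blast
qed

lemma preserves_normal_forms_a_pow: "preserves_normal_forms (a [^] (k::int))"
  unfolding preserves_normal_forms_def
proof (intro allI impI)
  fix u
  assume "normal u"
  then obtain i r where u: "u = cons_syl True i r" "0 \<le> i" "i < int m" "\<not> head_is True r" "normal r"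
    using normal_syllables_split_a m_pos by blast
  define q where "q = (k + i) div int m"
  define i' where "i' = (k + i) mod int m"
  have "a [^] (k + i) = a [^] i' \<otimes> (a [^] m) [^] q"
    using int_pow_mult[OF a_closed, of i' "int m * q"] int_pow_pow[OF a_closed, of "int m" q]
    by (simp add: i'_def q_def int_pow_int)
  then have "a [^] k \<otimes> W u = a [^] i' \<otimes> ((a [^] m) [^] q \<otimes> W r)"
    using u(1) a_closed by (simp add: syl_prod_cons_syl int_pow_mult m_assoc[symmetric])
  also have "\<dots> = W (cons_syl True i' r) \<otimes> (a [^] m) [^] q"
    using int_pow_commute[OF _ _ a_power_commute_syl_prod[of r, symmetric]] a_closed
    by (simp add: syl_prod_cons_syl m_assoc)
  finally have "a [^] k \<otimes> W u = W (cons_syl True i' r) \<otimes> (a [^] m) [^] q" .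
  moreover have "normal (cons_syl True i' r)"
    using u m_pos by (intro normal_syllables_cons_syl_a) (simp_all add: i'_def)
  moreover have "(a [^] m) [^] q \<in> H"
    using subgroup_int_pow_closed[OF subgroup_H] by (simp add: generate.incl)
  ultimately show "\<exists>u' h. normal u' \<and> h \<in> H \<and> a [^] k \<otimes> W u = W u' \<otimes> h"
    by blast
qed

lemma preserves_normal_forms_d_pow: "preserves_normal_forms (d [^] (k::int))"
  unfolding preserves_normal_forms_def
proof (intro allI impI)
  fix u
  assume "normal u"
  show "\<exists>u' h. normal u' \<and> h \<in> H \<and> d [^] k \<otimes> W u = W u' \<otimes> h"
  proof (cases "u = []")
    case True
    then show ?thesis
      using subgroup_int_pow_closed[OF subgroup_H] d_closed
      by (intro exI[of _ "[]"] exI[of _ "d [^] k"]) (simp add: generate.incl)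
  next
    case False
    then obtain j r where u: "u = cons_syl False j r" "head_is True r" "normal r"
      using normal_syllables_split_d[OF \<open>normal u\<close>] by auto
    then have "d [^] k \<otimes> W u = W (cons_syl False (k + j) r) \<otimes> \<one>"
      using d_closed by (simp add: syl_prod_cons_syl int_pow_mult m_assoc)
    moreover have "normal (cons_syl False (k + j) r)"
      using u by (simp add: normal_syllables_cons_syl_d)
    ultimately show ?thesis
      using subgroup.one_closed[OF subgroup_H] by blast
  qed
qed

lemma normal_form:
  assumes "f \<in> generate G {a, d}"
  shows "\<exists>u h. normal u \<and> h \<in> H \<and> f = W u \<otimes> h"
proof -
  have "preserves_normal_forms f"
    using assms
  proof (induction rule: generate.induct)
    case one
    show ?case using preserves_normal_forms_a_pow[of 0] by simp
  next
    case (incl x)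
    then show ?case
      using preserves_normal_forms_a_pow[of 1] preserves_normal_forms_d_pow[of 1] a_closed d_closed
      by auto
  next
    case (inv x)
    then show ?case
      using preserves_normal_forms_a_pow[of "-1"] preserves_normal_forms_d_pow[of "-1"]
        a_closed d_closed
      by (auto simp: int_pow_neg)
  next
    case (eng x y)
    then show ?case
      using preserves_normal_forms_mult subgroup.subset[OF subgroup_generate] by blast
  qed
  then obtain u h where "normal u" "h \<in> H" "f \<otimes> W [] = W u \<otimes> h"
    unfolding preserves_normal_forms_def using normal_syllables.simps(1) by blast
  moreover have "f \<in> carrier G"
    using assms subgroup.subset[OF subgroup_generate] by blast
  ultimately show ?thesis
    by auto
qed

lemma generate_insert_H_subset: "generate G (insert a H) \<subseteq> generate G {a, d}"
proof -
  have "a [^] m \<in> generate G {a, d}"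
    using subgroup_int_pow_closed[OF subgroup_generate, of a "int m"]
    by (simp add: int_pow_int generate.incl)
  then have "H \<subseteq> generate G {a, d}"
    using generate_subgroup_incl[OF _ subgroup_generate] by (simp add: generate.incl)
  then show ?thesis
    using generate_subgroup_incl[OF _ subgroup_generate] by (simp add: generate.incl)
qed

lemma syl_prod_strip_d_head: "\<exists>h\<in>H. W u = h \<otimes> W (strip_d_head u)"
proof (cases u rule: strip_d_head.cases)
  case (1 j r)
  then show ?thesis
    using subgroup_int_pow_closed[OF subgroup_H] by (auto simp: generate.incl)
qed (auto intro!: bexI[of _ \<one>] subgroup.one_closed[OF subgroup_H] simp: a_closed)

lemma double_coset_if_strip_d_head_eq:
  assumes "h \<in> H" "h' \<in> H" "strip_d_head u = strip_d_head v"
  shows "W u \<otimes> h \<in> H <#> {W v \<otimes> h'} <#> H"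
proof -
  obtain h1 h2 where h12: "h1 \<in> H" "h2 \<in> H" "W u = h1 \<otimes> W (strip_d_head u)"
    "W v = h2 \<otimes> W (strip_d_head u)"
    using syl_prod_strip_d_head assms(3) by metis
  have "h \<in> carrier G" "h' \<in> carrier G" "h1 \<in> carrier G" "h2 \<in> carrier G"
    using h12 assms(1,2) subgroup.subset[OF subgroup_H] by auto
  then have "W u \<otimes> h = (h1 \<otimes> inv h2) \<otimes> (W v \<otimes> h') \<otimes> (inv h' \<otimes> h)"
    using h12 by (simp add: m_assoc inv_solve_left inv_solve_left') (simp add: m_assoc[symmetric])
  moreover have "h1 \<otimes> inv h2 \<in> H" "inv h' \<otimes> h \<in> H"
    using h12 assms(1,2) subgroup.m_closed[OF subgroup_H] subgroup.m_inv_closed[OF subgroup_H]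
    by auto
  ultimately show ?thesis
    unfolding set_mult_def by blast
qed

end

section \<open>A permutation representation of G_mn(t)\<close>

lemma funpow_apfst: "(apfst (f :: 'a \<Rightarrow> 'a) ^^ k) z = apfst (f ^^ k) z"
  by (induction k arbitrary: z) (simp_all add: apfst_compose)

lemma funpow_pred_apply:
  fixes f :: "'a \<Rightarrow> 'a"
  assumes "0 < N"
  shows "(f ^^ (N - 1)) (f z) = (f ^^ N) z" "f ((f ^^ (N - 1)) z) = (f ^^ N) z"
  using assms by (cases N; simp add: funpow_swap1)+

lemma int_pred_mult_mod:
  assumes "N dvd M" "0 < M"
  shows "int ((M - 1) * K) mod int N = - int K mod int N"
proof -
  have "int ((M - 1) * K) - - int K = int M * int K"
    using assms(2) by (simp add: of_nat_diff algebra_simps)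
  then show ?thesis
    using assms(1) by (simp add: mod_eq_dvd_iff)
qed

lemma foldr_wpow:
  "foldr F (wpow g k) = (if k < 0 then F (g, True) ^^ nat (- k) else F (g, False) ^^ nat k)"
  by (simp add: wpow_def)

text \<open>A state (xs, c) is a syllable sequence together with the number c < Q of letters y read
  since the last complete d = y^Q.\<close>
definition y_step :: "nat \<Rightarrow> nat \<Rightarrow> (bool \<times> int) list \<times> nat \<Rightarrow> (bool \<times> int) list \<times> nat" where
  "y_step Q t s = (if Suc (snd s) < Q then (fst s, Suc (snd s)) else (lmult_d t (fst s), 0))"

lemma y_step_pow:
  assumes "c < Q"
  shows "(y_step Q t ^^ k) (xs, c) = ((lmult_d t ^^ ((c + k) div Q)) xs, (c + k) mod Q)"
proof (induction k)
  case (Suc k)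
  have "(c + k) mod Q < Q"
    using assms by auto
  then show ?case
    using Suc by (auto simp: y_step_def mod_Suc div_Suc)
qed (use assms in simp)

lemma y_step_pow_mult: "c < Q \<Longrightarrow> (y_step Q t ^^ (Q * j)) (xs, c) = ((lmult_d t ^^ j) xs, c)"
  by (simp add: y_step_pow)

text \<open>Inverse letters act by the inverse permutations, written as powers using the orders P
  of lmult_a and Q t of y_step.\<close>
fun letter_act :: "gen \<Rightarrow> nat \<Rightarrow> nat \<Rightarrow> nat \<Rightarrow> letter \<Rightarrow>
    (bool \<times> int) list \<times> nat \<Rightarrow> (bool \<times> int) list \<times> nat" where
  "letter_act x P Q t (g, e) =
     (if g = x then apfst (lmult_a P ^^ (if e then P - 1 else 1))
      else y_step Q t ^^ (if e then Q * t - 1 else 1))"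

definition valid_state :: "nat \<Rightarrow> nat \<Rightarrow> nat \<Rightarrow> (bool \<times> int) list \<times> nat \<Rightarrow> bool" where
  "valid_state P Q t s \<longleftrightarrow> normal_mod P t (fst s) \<and> snd s < Q"

fun syl_word :: "gen \<Rightarrow> gen \<Rightarrow> nat \<Rightarrow> (bool \<times> int) list \<Rightarrow> word" where
  "syl_word x y Q [] = []"
| "syl_word x y Q ((b, e) # r) = (if b then wpow x e else wpow y (int Q * e)) @ syl_word x y Q r"

lemma rho_word_class:
  "rho m n t (word_class {comm_rel m n} w) =
     word_class {comm_rel m n, wpow Ga (int (m * t)), wpow Gb (int (n * t))} w"
  unfolding rho_def by (rule word_class_some_mono) auto

text \<open>Both cases of the theorem at once: x is the generator of A resp. B, y the other one,
  and c = x^P, d = y^Q.\<close>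
locale generator_roles =
  fixes x y :: gen and m n P Q :: nat
  assumes m_gt_1: "1 < m" and n_gt_1: "1 < n"
    and roles: "(x = Ga \<and> y = Gb \<and> P = m \<and> Q = n) \<or> (x = Gb \<and> y = Ga \<and> P = n \<and> Q = m)"
begin

abbreviation act :: "nat \<Rightarrow> letter \<Rightarrow> (bool \<times> int) list \<times> nat \<Rightarrow> (bool \<times> int) list \<times> nat" where
  "act t \<equiv> letter_act x P Q t"

abbreviation valid :: "nat \<Rightarrow> (bool \<times> int) list \<times> nat \<Rightarrow> bool" where
  "valid t \<equiv> valid_state P Q t"

abbreviation relators :: "nat \<Rightarrow> word set" where
  "relators t \<equiv> {comm_rel m n, wpow Ga (int (m * t)), wpow Gb (int (n * t))}"

lemma P_gt_1: "1 < P" and Q_gt_1: "1 < Q" and y_neq_x: "y \<noteq> x"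
  using roles m_gt_1 n_gt_1 by auto

lemma act_x: "act t (x, e) = apfst (lmult_a P ^^ (if e then P - 1 else 1))"
  by simp

lemma act_y: "act t (y, e) = y_step Q t ^^ (if e then Q * t - 1 else 1)"
  using y_neq_x by simp

lemma lmult_a_pow_mod: "normal_mod P t xs \<Longrightarrow> (lmult_a P ^^ k) xs = (lmult_a P ^^ (k mod P)) xs"
  using funpow_mod_eq[OF lmult_a_pow_period] P_gt_1 by simp

lemma lmult_d_pow_mod: "normal_mod P t xs \<Longrightarrow> (lmult_d t ^^ k) xs = (lmult_d t ^^ (k mod t)) xs"
  using funpow_mod_eq[OF lmult_d_pow_period] by simp

lemma y_step_pow_period: "valid t s \<Longrightarrow> (y_step Q t ^^ (Q * t)) s = s"
  using y_step_pow_mult[of "snd s" Q t t "fst s"] lmult_d_pow_period[of P t "fst s"]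
  by (simp add: valid_state_def)

lemma lmult_a_pow_normal: "normal_mod P t xs \<Longrightarrow> normal_mod P t ((lmult_a P ^^ k) xs)"
  using lmult_a_normal P_gt_1 by (induction k) auto

lemma lmult_d_pow_normal: "1 < t \<Longrightarrow> normal_mod P t xs \<Longrightarrow> normal_mod P t ((lmult_d t ^^ k) xs)"
  using lmult_d_normal by (induction k) auto

lemma act_valid: "1 < t \<Longrightarrow> valid t s \<Longrightarrow> valid t (act t l s)"
proof -
  assume "1 < t" "valid t s"
  moreover have "valid t ((y_step Q t ^^ k) s)" if "valid t s" for k
    using that \<open>1 < t\<close> by (cases s) (simp add: y_step_pow valid_state_def lmult_d_pow_normal Q_gt_1)
  ultimately show ?thesis
    by (cases l) (auto simp: valid_state_def lmult_a_pow_normal)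
qed

lemma act_linv: "1 < t \<Longrightarrow> valid t s \<Longrightarrow> act t (linv l) (act t l s) = s"
proof -
  assume "1 < t" and s: "valid t s"
  have "(lmult_a P ^^ P) (fst s) = fst s"
    using lmult_a_pow_period[of P "\<lambda>j. 0 < j \<and> j < int t" "fst s"] P_gt_1 s
    by (simp add: valid_state_def)
  then have "(lmult_a P ^^ (P - 1)) (lmult_a P (fst s)) = fst s"
    "lmult_a P ((lmult_a P ^^ (P - 1)) (fst s)) = fst s"
    using funpow_pred_apply[of P "lmult_a P" "fst s"] P_gt_1 by simp_all
  moreover have "(y_step Q t ^^ (Q * t - 1)) (y_step Q t s) = s"
    "y_step Q t ((y_step Q t ^^ (Q * t - 1)) s) = s"
    using funpow_pred_apply[of "Q * t" "y_step Q t" s] y_step_pow_period[OF s] \<open>1 < t\<close> Q_gt_1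
    by simp_all
  ultimately show ?thesis
    by (cases l; cases s) auto
qed

lemma foldr_act_wpow_x:
  assumes "normal_mod P t xs"
  shows "foldr (act t) (wpow x k) (xs, c) = ((lmult_a P ^^ nat (k mod int P)) xs, c)"
proof (cases "k < 0")
  case True
  have "int (((P - 1) * nat (- k)) mod P) = k mod int P"
    using int_pred_mult_mod[of P P "nat (- k)"] P_gt_1 True by (simp add: of_nat_mod)
  then have "((P - 1) * nat (- k)) mod P = nat (k mod int P)"
    by (metis nat_int)
  then show ?thesis
    using True lmult_a_pow_mod[OF assms, of "(P - 1) * nat (- k)"]
    by (simp add: foldr_wpow act_x funpow_apfst funpow_mult del: letter_act.simps)
next
  case False
  then show ?thesis
    using lmult_a_pow_mod[OF assms]
    by (simp add: foldr_wpow act_x funpow_apfst funpow_mult nat_mod_distrib del: letter_act.simps)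
qed

lemma foldr_act_wpow_y:
  assumes "1 < t" "c < Q" "normal_mod P t xs"
  shows "foldr (act t) (wpow y (int Q * k)) (xs, c) = ((lmult_d t ^^ nat (k mod int t)) xs, c)"
proof (cases "k < 0")
  case True
  have "int (((Q * t - 1) * nat (- k)) mod t) = k mod int t"
    using int_pred_mult_mod[of t "Q * t" "nat (- k)"] Q_gt_1 assms(1) True by (simp add: of_nat_mod)
  then have "((Q * t - 1) * nat (- k)) mod t = nat (k mod int t)"
    by (metis nat_int)
  moreover have "nat (- (int Q * k)) = Q * nat (- k)"
    using nat_mult_distrib[of "int Q" "- k"] by simp
  moreover have "foldr (act t) (wpow y (int Q * k)) (xs, c) =
      (y_step Q t ^^ (Q * ((Q * t - 1) * nat (- k)))) (xs, c)"
    using True Q_gt_1 calculation(2)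
    by (simp add: foldr_wpow act_y funpow_mult mult_less_0_iff ac_simps del: letter_act.simps)
  ultimately show ?thesis
    using lmult_d_pow_mod[OF assms(3), of "(Q * t - 1) * nat (- k)"] y_step_pow_mult[OF assms(2)]
    by simp
next
  case False
  then show ?thesis
    using lmult_d_pow_mod[OF assms(3)] y_step_pow_mult[OF assms(2)]
    by (simp add: foldr_wpow act_y nat_mod_distrib nat_mult_distrib mult_less_0_iff
        del: letter_act.simps)
qed

lemma foldr_act_valid: "1 < t \<Longrightarrow> valid t s \<Longrightarrow> valid t (foldr (act t) w s)"
  by (induction w) (simp_all add: act_valid)

lemma foldr_act_winv: "1 < t \<Longrightarrow> valid t s \<Longrightarrow> foldr (act t) (winv w) (foldr (act t) w s) = s"
  using foldr_pres_eq[OF pres_eq_winv_append[of "{}" w], of "{s. valid t s}" "act t" s]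
  by (simp add: act_valid act_linv)

lemma foldr_act_wpow_x_trivial:
  assumes "int P dvd k" "valid t s"
  shows "foldr (act t) (wpow x k) s = s"
  using foldr_act_wpow_x[of t "fst s" k "snd s"] assms by (simp add: valid_state_def)

lemma foldr_act_comm_rel:
  assumes "1 < t" "valid t s"
  shows "foldr (act t) (comm_rel m n) s = s"
proof -
  let ?B = "wpow y (int Q)"
  have valid_B: "valid t (foldr (act t) ?B s)"
    using foldr_act_valid assms by blast
  from roles consider "x = Ga" "y = Gb" "P = m" "Q = n" | "x = Gb" "y = Ga" "P = n" "Q = m"
    by blast
  then show ?thesis
  proof cases
    case 1
    then have "comm_rel m n = wpow x (- int P) @ winv ?B @ wpow x (int P) @ ?B"
      by (simp add: comm_rel_def winv_wpow)
    then show ?thesis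
      using assms valid_B foldr_act_valid[OF assms(1)]
      by (simp add: foldr_act_wpow_x_trivial foldr_act_winv)
  next
    case 2
    then have "comm_rel m n = winv ?B @ wpow x (- int P) @ ?B @ wpow x (int P)"
      by (simp add: comm_rel_def winv_wpow)
    then show ?thesis
      using assms valid_B by (simp add: foldr_act_wpow_x_trivial foldr_act_winv)
  qed
qed

lemma foldr_act_relator:
  assumes "1 < t" "r \<in> relators t" "valid t s"
  shows "foldr (act t) r s = s"
proof -
  have "r \<in> {comm_rel m n, wpow x (int P * int t), wpow y (int Q * int t)}"
    using assms(2) roles by auto
  moreover have "foldr (act t) (wpow y (int Q * int t)) s = s"
    using foldr_act_wpow_y[of t "snd s" "fst s" "int t"] assms(1,3) by (simp add: valid_state_def)
  moreover have "foldr (act t) (wpow x (int P * int t)) s = s"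
    using foldr_act_wpow_x_trivial[OF _ assms(3)] by simp
  ultimately show ?thesis
    using foldr_act_comm_rel[OF assms(1,3)] by blast
qed

lemma foldr_act_pres_eq:
  assumes "1 < t" "pres_eq (relators t) u v" "valid t s"
  shows "foldr (act t) u s = foldr (act t) v s"
proof (rule foldr_pres_eq[OF assms(2), where S = "{s. valid t s}"])
  show "act t l s' \<in> {s. valid t s}" if "s' \<in> {s. valid t s}" for l s'
    using that act_valid[OF assms(1)] by simp
  show "act t (linv l) (act t l s') = s'" if "s' \<in> {s. valid t s}" for l s'
    using that act_linv[OF assms(1)] by simp
  show "foldr (act t) r s' = s'" if "r \<in> relators t" "s' \<in> {s. valid t s}" for r s'
    using that foldr_act_relator[OF assms(1)] by simp
qed (use assms(3) in simp)

abbreviation G1 :: "word set monoid" where "G1 \<equiv> presented_group {comm_rel m n}"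

abbreviation gx :: "word set" where "gx \<equiv> word_class {comm_rel m n} [(x, False)]"

abbreviation gd :: "word set" where "gd \<equiv> word_class {comm_rel m n} [(y, False)] [^]\<^bsub>G1\<^esub> Q"

lemma foldr_act_word_class:
  "1 < t \<Longrightarrow> w \<in> word_class {comm_rel m n} w0 \<Longrightarrow> valid t s \<Longrightarrow> foldr (act t) w s = foldr (act t) w0 s"
  using foldr_act_pres_eq pres_eq_mono[of "{comm_rel m n}" w0 w "relators t"]
  by (simp add: mem_word_class_iff)

lemma gx_int_pow: "gx [^]\<^bsub>G1\<^esub> (k::int) = word_class {comm_rel m n} (wpow x k)"
  by (simp add: word_class_wpow)

lemma gd_int_pow: "gd [^]\<^bsub>G1\<^esub> (k::int) = word_class {comm_rel m n} (wpow y (int Q * k))"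
  using group.int_pow_pow[OF group_presented_group, of "word_class {comm_rel m n} [(y, False)]"]
  by (simp add: word_class_wpow carrier_presented_group int_pow_int[symmetric])

lemma (in group) commute_if_commutator_one:
  assumes "x \<in> carrier G" "y \<in> carrier G" "inv x \<otimes> (inv y \<otimes> (x \<otimes> y)) = \<one>"
  shows "x \<otimes> y = y \<otimes> x"
proof -
  have "inv y \<otimes> (x \<otimes> y) = x"
    using assms inv_solve_left'[of \<one> x "inv y \<otimes> (x \<otimes> y)"] by simp
  then show ?thesis
    using assms inv_solve_left'[of x y "x \<otimes> y"] by simp
qed

lemma gx_power_commute: "gx [^]\<^bsub>G1\<^esub> P \<otimes>\<^bsub>G1\<^esub> gd = gd \<otimes>\<^bsub>G1\<^esub> gx [^]\<^bsub>G1\<^esub> P"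
proof -
  let ?a = "word_class {comm_rel m n} (wpow Ga (int m))"
  let ?b = "word_class {comm_rel m n} (wpow Gb (int n))"
  have "pres_eq {comm_rel m n} ([] @ comm_rel m n @ []) ([] @ [])"
    by (rule pres_eq.relator) simp
  then have "inv\<^bsub>G1\<^esub> ?a \<otimes>\<^bsub>G1\<^esub> (inv\<^bsub>G1\<^esub> ?b \<otimes>\<^bsub>G1\<^esub> (?a \<otimes>\<^bsub>G1\<^esub> ?b)) = \<one>\<^bsub>G1\<^esub>"
    by (simp add: inv_word_class mult_word_class one_presented_group word_class_eq_iff
        comm_rel_def winv_wpow)
  then have "?a \<otimes>\<^bsub>G1\<^esub> ?b = ?b \<otimes>\<^bsub>G1\<^esub> ?a"
    using group.commute_if_commutator_one[OF group_presented_group, where x = ?a and y = ?b]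
    by (simp add: carrier_presented_group)
  moreover have "gx [^]\<^bsub>G1\<^esub> P = word_class {comm_rel m n} (wpow x (int P))"
    "gd = word_class {comm_rel m n} (wpow y (int Q))"
    by (simp_all add: word_class_wpow int_pow_int)
  ultimately show ?thesis
    using roles by auto
qed

sublocale nf: commuting_power G1 gx gd P
  using group_presented_group P_gt_1 gx_power_commute
  by (intro commuting_power.intro commuting_power_axioms.intro)
    (simp_all add: carrier_presented_group word_class_replicate)

lemma syl_prod_word_class: "nf.W u = word_class {comm_rel m n} (syl_word x y Q u)"
proof (induction u)
  case (Cons z r)
  then show ?case
    by (cases z; cases "fst z") (simp_all add: gx_int_pow gd_int_pow mult_word_class)
qed (simp add: one_presented_group)

lemma foldr_act_syl_word:
  assumes "1 < t" "nf.normal u" "\<forall>z\<in>set u. \<bar>snd z\<bar> < int t"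
  shows "foldr (act t) (syl_word x y Q u) ([], 0) = (reduce_d t u, 0)"
  using assms(2,3)
proof (induction u)
  case (Cons z r)
  obtain b e where z: "z = (b, e)" by fastforce
  have normal: "normal_mod P t (reduce_d t (z # r))"
    using normal_mod_reduce_d Cons.prems by blast
  have IH: "foldr (act t) (syl_word x y Q r) ([], 0) = (reduce_d t r, 0)"
    using Cons z by (cases b) (simp_all add: normal_syllables_Cons_a normal_syllables_Cons_d)
  show ?case
  proof (cases b)
    case True
    then have "1 \<le> e" "e < int P" "\<not> head_is True (reduce_d t r)" "normal_mod P t (reduce_d t r)"
      using normal z by (simp_all add: normal_syllables_Cons_a)
    then show ?thesis
      using IH z True foldr_act_wpow_x lmult_a_pow[of "reduce_d t r" _ P 0]
      by (simp add: cons_syl_def)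
  next
    case False
    then have "0 < e mod int t" "head_is True (reduce_d t r)" "normal_mod P t (reduce_d t r)"
      using normal z by (simp_all add: normal_syllables_Cons_d)
    then show ?thesis
      using IH z False foldr_act_wpow_y[OF assms(1)] lmult_d_pow[of "reduce_d t r" _ t 0] Q_gt_1
      by (simp add: cons_syl_def)
  qed
qed simp

lemma H_word_class: "h \<in> nf.H \<Longrightarrow> \<exists>w. h = word_class {comm_rel m n} w"
  using subgroup.subset[OF nf.subgroup_H] by (auto simp: carrier_presented_group)

lemma foldr_act_gx_pow:
  "1 < t \<Longrightarrow> w \<in> gx [^]\<^bsub>G1\<^esub> (int P * k) \<Longrightarrow> valid t s \<Longrightarrow> foldr (act t) w s = s"
  by (simp add: gx_int_pow foldr_act_word_class foldr_act_wpow_x_trivial)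

lemma foldr_act_gd_pow:
  "1 < t \<Longrightarrow> w \<in> gd [^]\<^bsub>G1\<^esub> k \<Longrightarrow> valid t (xs, c) \<Longrightarrow>
    foldr (act t) w (xs, c) = ((lmult_d t ^^ nat (k mod int t)) xs, c)"
  by (simp add: gd_int_pow foldr_act_word_class foldr_act_wpow_y valid_state_def)

lemma foldr_act_H_generator:
  assumes "1 < t" "h \<in> {gx [^]\<^bsub>G1\<^esub> (int P * k), gd [^]\<^bsub>G1\<^esub> k}" "w \<in> h" "valid t (xs, c)"
  shows "\<exists>j. foldr (act t) w (xs, c) = ((lmult_d t ^^ j) xs, c)"
proof -
  from assms(2,3) consider "w \<in> gx [^]\<^bsub>G1\<^esub> (int P * k)" | "w \<in> gd [^]\<^bsub>G1\<^esub> k"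
    by blast
  then show ?thesis
  proof cases
    case 1
    then have "foldr (act t) w (xs, c) = ((lmult_d t ^^ 0) xs, c)"
      using foldr_act_gx_pow[OF assms(1) _ assms(4)] by simp
    then show ?thesis ..
  next
    case 2
    then show ?thesis
      using foldr_act_gd_pow[OF assms(1) _ assms(4)] by blast
  qed
qed

lemma foldr_act_H:
  assumes "1 < t" "h \<in> nf.H"
  shows "\<forall>w\<in>h. \<forall>xs c. valid t (xs, c) \<longrightarrow> (\<exists>j. foldr (act t) w (xs, c) = ((lmult_d t ^^ j) xs, c))"
  using assms(2)
proof (induction rule: generate.induct)
  case one
  have generator: "\<one>\<^bsub>G1\<^esub> \<in> {gx [^]\<^bsub>G1\<^esub> (int P * 0), gd [^]\<^bsub>G1\<^esub> (0::int)}"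
    by simp
  then show ?case
    using foldr_act_H_generator[OF assms(1) generator] by blast
next
  case (incl h)
  then have generator: "h \<in> {gx [^]\<^bsub>G1\<^esub> (int P * 1), gd [^]\<^bsub>G1\<^esub> (1::int)}"
    using group.int_pow_1[OF group_presented_group nf.d_closed] by (auto simp: int_pow_int)
  then show ?case
    using foldr_act_H_generator[OF assms(1) generator] by blast
next
  case (inv h)
  then have generator: "inv\<^bsub>G1\<^esub> h \<in> {gx [^]\<^bsub>G1\<^esub> (int P * -1), gd [^]\<^bsub>G1\<^esub> (-1::int)}"
    using group.int_pow_neg[OF group_presented_group nf.a_closed, of "int P"]
      group.int_pow_neg[OF group_presented_group nf.d_closed, of 1]
      group.int_pow_1[OF group_presented_group nf.d_closed]
    by (auto simp: int_pow_int)
  then show ?case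
    using foldr_act_H_generator[OF assms(1) generator] by blast
next
  case (eng h1 h2)
  show ?case
  proof (intro ballI allI impI)
    fix w xs c
    assume "w \<in> h1 \<otimes>\<^bsub>G1\<^esub> h2" "valid t (xs, c)"
    obtain w1 w2 where w12: "h1 = word_class {comm_rel m n} w1" "h2 = word_class {comm_rel m n} w2"
      using H_word_class eng.hyps by metis
    then obtain j2 where j2: "foldr (act t) w2 (xs, c) = ((lmult_d t ^^ j2) xs, c)"
      using eng.IH(2) \<open>valid t (xs, c)\<close> mem_word_class_self by blast
    have "valid t ((lmult_d t ^^ j2) xs, c)"
      using \<open>valid t (xs, c)\<close> lmult_d_pow_normal[OF assms(1)] by (simp add: valid_state_def)
    then obtain j1 where j1:
      "foldr (act t) w1 ((lmult_d t ^^ j2) xs, c) = ((lmult_d t ^^ j1) ((lmult_d t ^^ j2) xs), c)"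
      using eng.IH(1) w12 mem_word_class_self by blast
    have "foldr (act t) w (xs, c) = foldr (act t) w1 (foldr (act t) w2 (xs, c))"
      using \<open>w \<in> h1 \<otimes>\<^bsub>G1\<^esub> h2\<close> w12 foldr_act_word_class[OF assms(1)] \<open>valid t (xs, c)\<close>
      by (simp add: mult_word_class)
    also have "\<dots> = ((lmult_d t ^^ (j1 + j2)) xs, c)"
      using j1 j2 by (simp add: funpow_add)
    finally show "\<exists>j. foldr (act t) w (xs, c) = ((lmult_d t ^^ j) xs, c)" ..
  qed
qed

lemma foldr_act_H_base:
  assumes "1 < t" "h \<in> nf.H" "w \<in> h"
  shows "foldr (act t) w ([], 0) = ([], 0)"
proof -
  have "valid t ([], 0)"
    using Q_gt_1 by (simp add: valid_state_def)
  then obtain j where "foldr (act t) w ([], 0) = ((lmult_d t ^^ j) [], 0)"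
    using foldr_act_H[OF assms(1,2)] assms(3) by blast
  then show ?thesis
    by (simp add: lmult_d_pow_Nil)
qed

lemma foldr_act_normal_form:
  assumes "1 < t" "nf.normal u" "\<forall>z\<in>set u. \<bar>snd z\<bar> < int t" "h \<in> nf.H" "w \<in> nf.W u \<otimes>\<^bsub>G1\<^esub> h"
  shows "foldr (act t) w ([], 0) = (reduce_d t u, 0)"
proof -
  obtain wh where wh: "h = word_class {comm_rel m n} wh"
    using H_word_class assms(4) by blast
  then have "w \<in> word_class {comm_rel m n} (syl_word x y Q u @ wh)"
    using assms(5) by (simp add: syl_prod_word_class mult_word_class)
  then have "foldr (act t) w ([], 0) = foldr (act t) (syl_word x y Q u) (foldr (act t) wh ([], 0))"
    using foldr_act_word_class[OF assms(1)] Q_gt_1 by (simp add: valid_state_def)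
  then show ?thesis
    using foldr_act_H_base[OF assms(1,4)] foldr_act_syl_word[OF assms(1-3)] wh mem_word_class_self
    by simp
qed

lemma reduce_d_strip_d_head_eq_if_double_coset:
  assumes "1 < t" "nf.normal u" "nf.normal v" "\<forall>z\<in>set u. \<bar>snd z\<bar> < int t"
    "\<forall>z\<in>set v. \<bar>snd z\<bar> < int t" "h \<in> nf.H" "h' \<in> nf.H"
    and "rho m n t (nf.W u \<otimes>\<^bsub>G1\<^esub> h) \<in> rho m n t ` nf.H <#>\<^bsub>Gmnt m n t\<^esub>
      {rho m n t (nf.W v \<otimes>\<^bsub>G1\<^esub> h')} <#>\<^bsub>Gmnt m n t\<^esub> rho m n t ` nf.H"
  shows "reduce_d t (strip_d_head u) = reduce_d t (strip_d_head v)"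
proof -
  obtain h1 h2 where h12: "h1 \<in> nf.H" "h2 \<in> nf.H"
    "rho m n t (nf.W u \<otimes>\<^bsub>G1\<^esub> h) =
       rho m n t h1 \<otimes>\<^bsub>Gmnt m n t\<^esub> rho m n t (nf.W v \<otimes>\<^bsub>G1\<^esub> h') \<otimes>\<^bsub>Gmnt m n t\<^esub> rho m n t h2"
    using assms(8) unfolding set_mult_def by blast
  obtain wh wh' w1 w2 where words:
    "h = word_class {comm_rel m n} wh" "h' = word_class {comm_rel m n} wh'"
    "h1 = word_class {comm_rel m n} w1" "h2 = word_class {comm_rel m n} w2"
    using H_word_class assms(6,7) h12(1,2) by metis
  let ?wf = "syl_word x y Q u @ wh" and ?wg = "syl_word x y Q v @ wh'"
  have "pres_eq (relators t) ?wf (w1 @ ?wg @ w2)"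
    using h12(3) words
    by (simp add: syl_prod_word_class mult_word_class rho_word_class Gmnt_def word_class_eq_iff)
  then have "foldr (act t) ?wf ([], 0) = foldr (act t) (w1 @ ?wg @ w2) ([], 0)"
    using Q_gt_1 by (intro foldr_act_pres_eq[OF assms(1)]) (simp_all add: valid_state_def)
  then have "foldr (act t) ?wf ([], 0) =
      foldr (act t) w1 (foldr (act t) ?wg (foldr (act t) w2 ([], 0)))"
    by simp
  moreover have "foldr (act t) ?wf ([], 0) = (reduce_d t u, 0)"
    using foldr_act_normal_form[OF assms(1,2,4,6), of ?wf] words
    by (simp add: syl_prod_word_class mult_word_class mem_word_class_self del: foldr_append)
  moreover have "foldr (act t) ?wg ([], 0) = (reduce_d t v, 0)"
    using foldr_act_normal_form[OF assms(1,3,5,7), of ?wg] words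
    by (simp add: syl_prod_word_class mult_word_class mem_word_class_self del: foldr_append)
  moreover have "foldr (act t) w2 ([], 0) = ([], 0)"
    using foldr_act_H_base[OF assms(1) h12(2)] words mem_word_class_self by simp
  moreover have "normal_mod P t (reduce_d t v)"
    using normal_mod_reduce_d assms(3,5) by blast
  then obtain j where "foldr (act t) w1 (reduce_d t v, 0) = ((lmult_d t ^^ j) (reduce_d t v), 0)"
    using foldr_act_H[OF assms(1) h12(1)] words mem_word_class_self Q_gt_1
    by (fastforce simp: valid_state_def)
  ultimately have "reduce_d t u = (lmult_d t ^^ j) (reduce_d t v)"
    by simp
  then have "strip_d_head (reduce_d t u) = strip_d_head (reduce_d t v)"
    using strip_d_head_lmult_d_pow[OF \<open>normal_mod P t (reduce_d t v)\<close>] by simp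
  then show ?thesis
    by (simp add: strip_d_head_reduce_d)
qed

lemma strip_d_head_eq_if_double_coset:
  assumes "nf.normal u" "nf.normal v" "h \<in> nf.H" "h' \<in> nf.H"
    and "0 \<le> M" "\<forall>z\<in>set u. \<bar>snd z\<bar> \<le> M" "\<forall>z\<in>set v. \<bar>snd z\<bar> \<le> M" "2 * M + 2 \<le> int t"
    and "rho m n t (nf.W u \<otimes>\<^bsub>G1\<^esub> h) \<in> rho m n t ` nf.H <#>\<^bsub>Gmnt m n t\<^esub>
      {rho m n t (nf.W v \<otimes>\<^bsub>G1\<^esub> h')} <#>\<^bsub>Gmnt m n t\<^esub> rho m n t ` nf.H"
  shows "strip_d_head u = strip_d_head v"
proof (rule reduce_d_inj)
  have "1 < t" "\<forall>z\<in>set u. \<bar>snd z\<bar> < int t" "\<forall>z\<in>set v. \<bar>snd z\<bar> < int t"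
    using assms(5-8) by fastforce+
  then show "reduce_d t (strip_d_head u) = reduce_d t (strip_d_head v)"
    using reduce_d_strip_d_head_eq_if_double_coset assms(1-4,9) by blast
  show "\<forall>z\<in>set (strip_d_head u). \<bar>snd z\<bar> \<le> M" "\<forall>z\<in>set (strip_d_head v). \<bar>snd z\<bar> \<le> M"
    using assms(6,7) set_strip_d_head by blast+
  show "2 * M < int t"
    using assms(8) by linarith
qed

lemma double_coset_separation:
  assumes "f \<in> generate G1 (insert gx nf.H)" "g \<in> generate G1 (insert gx nf.H)"
    and "f \<notin> nf.H <#>\<^bsub>G1\<^esub> {g} <#>\<^bsub>G1\<^esub> nf.H"
  shows "\<exists>t0>1. \<forall>t. 0 < t \<and> t0 dvd t \<longrightarrow>
    rho m n t f \<notin> rho m n t ` nf.H <#>\<^bsub>Gmnt m n t\<^esub> {rho m n t g} <#>\<^bsub>Gmnt m n t\<^esub> rho m n t ` nf.H"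
proof -
  obtain u h where u: "nf.normal u" "h \<in> nf.H" "f = nf.W u \<otimes>\<^bsub>G1\<^esub> h"
    using nf.normal_form nf.generate_insert_H_subset assms(1) by blast
  obtain v h' where v: "nf.normal v" "h' \<in> nf.H" "g = nf.W v \<otimes>\<^bsub>G1\<^esub> h'"
    using nf.normal_form nf.generate_insert_H_subset assms(2) by blast
  have "strip_d_head u \<noteq> strip_d_head v"
    using nf.double_coset_if_strip_d_head_eq u v assms(3) by blast
  define M where "M = Max (insert 0 ((\<lambda>z. \<bar>snd z\<bar>) ` set (u @ v)))"
  have M: "0 \<le> M" "\<forall>z\<in>set u. \<bar>snd z\<bar> \<le> M" "\<forall>z\<in>set v. \<bar>snd z\<bar> \<le> M"
    by (auto simp: M_def intro!: Max_ge)
  show ?thesis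
  proof (intro exI[of _ "nat (2 * M + 2)"] conjI allI impI)
    show "1 < nat (2 * M + 2)"
      using M(1) by simp
    fix t
    assume "0 < t \<and> nat (2 * M + 2) dvd t"
    then have "2 * M + 2 \<le> int t"
      using dvd_imp_le by fastforce
    then show "rho m n t f \<notin> rho m n t ` nf.H <#>\<^bsub>Gmnt m n t\<^esub> {rho m n t g}
        <#>\<^bsub>Gmnt m n t\<^esub> rho m n t ` nf.H"
      using strip_d_head_eq_if_double_coset[OF u(1) v(1) u(2) v(2) M] u(3) v(3)
        \<open>strip_d_head u \<noteq> strip_d_head v\<close>
      by blast
  qed
qed

end

theorem proposition2p6:
  fixes m n :: nat and f g :: "word set"
  assumes "m > 1" and "n > 1"
    and "(f \<in> Asub m n \<and> g \<in> Asub m n) \<or> (f \<in> Bsub m n \<and> g \<in> Bsub m n)"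
    and "f \<notin> Hsub m n <#>\<^bsub>Gmn m n\<^esub> {g} <#>\<^bsub>Gmn m n\<^esub> Hsub m n"
  shows "\<exists>t0::nat. t0 > 1 \<and> (\<forall>t::nat. t > 0 \<and> t0 dvd t \<longrightarrow>
           rho m n t f \<notin> Ht m n t <#>\<^bsub>Gmnt m n t\<^esub> {rho m n t g} <#>\<^bsub>Gmnt m n t\<^esub> Ht m n t)"
  using assms(3)
proof
  assume fg: "f \<in> Asub m n \<and> g \<in> Asub m n"
  interpret generator_roles Ga Gb m n m n
    using assms(1,2) by unfold_locales auto
  have "Hsub m n = nf.H"
    by (simp add: Hsub_def c_el_def d_el_def a_el_def b_el_def Gmn_def)
  moreover have "Asub m n = generate G1 (insert gx nf.H)"
    by (simp add: Asub_def calculation[symmetric]) (simp add: a_el_def Gmn_def)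
  ultimately show ?thesis
    using double_coset_separation[of f g] fg assms(4) by (simp add: Ht_def Gmn_def)
next
  assume fg: "f \<in> Bsub m n \<and> g \<in> Bsub m n"
  interpret generator_roles Gb Ga m n n m
    using assms(1,2) by unfold_locales auto
  have "Hsub m n = nf.H"
    by (simp add: Hsub_def c_el_def d_el_def a_el_def b_el_def Gmn_def insert_commute)
  moreover have "Bsub m n = generate G1 (insert gx nf.H)"
    by (simp add: Bsub_def calculation[symmetric]) (simp add: b_el_def Gmn_def)
  ultimately show ?thesis
    using double_coset_separation[of f g] fg assms(4) by (simp add: Ht_def Gmn_def)
qed

end
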